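(* Suppose $R:\mathcal{A}\to\mathcal{B}$ has a monadic decomposition of monadic length $N\in\mathbb{N}$, with categories $\mathcal{B}_0=\mathcal{B},\mathcal{B}_1,\dots,\mathcal{B}_N$ and functors $R_n:\mathcal{A}\to\mathcal{B}_n$, and let $n\in\{0,\dots,N\}$. Let $U_{0,n}=U_{0,1}\circ U_{1,2}\circ\cdots\circ U_{n-1,n}:\mathcal{B}_n\to\mathcal{B}$ be the composite forgetful functor ($U_{0,0}=\mathrm{Id}$). Then: 1) $\mathrm{Im}R\subseteq\mathrm{Im}U_{0,n}$; 2) $\mathrm{Im}R=\mathrm{Im}U_{0,n}$ whenever $R_n$ is essentially surjective; 3) $\mathrm{Im}R=\mathrm{Im}U_{0,N}$.
   Context: For an adjunction $(L_n,R_n)$ with $R_n:\mathcal{A}\to\mathcal{B}_n$, unit $\eta_n$ and counit $\epsilon_n$, $\mathcal{B}_{n+1}$ is the Eilenberg–Moore category of the monad $(R_nL_n,R_n\epsilon_nL_n,\eta_n)$, $U_{n,n+1}:\mathcal{B}_{n+1}\to\mathcal{B}_n$ is its forgetful functor, and the comparison functor is $R_{n+1}:\mathcal{A}\to\mathcal{B}_{n+1}$, $R_{n+1}Y=(R_nY,R_n\epsilon_nY)$, $R_{n+1}f=R_nf$ (so $U_{n,n+1}R_{n+1}=R_n$). $R$ has a monadic decomposition of monadic length $N$ if there are functors $(R_n)_{0\le n\le N}$ with $R_0=R$, each $R_n$ having a left adjoint $L_n$, $R_{n+1}$ the comparison functor of $(L_n,R_n)$ for $n<N$, $L_N$ full and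 faithful and $L_n$ not full and faithful for $n<N$. For a functor $F:\mathcal{C}\to\mathcal{D}$, $\mathrm{Im}F$ is the full subcategory of $\mathcal{D}$ of objects isomorphic to $FC$ for some $C\in\mathcal{C}$; $F$ is essentially surjective if $\mathrm{Im}F=\mathcal{D}$. *)

theory Defs
  imports Main
begin

record ('o, 'm) cat =
  Obj :: "'o set"
  Arr :: "'m set"
  Dom :: "'m \<Rightarrow> 'o"
  Cod :: "'m \<Rightarrow> 'o"
  Idt :: "'o \<Rightarrow> 'm"
  Comp :: "'m \<Rightarrow> 'm \<Rightarrow> 'm"

definition hom :: "('o, 'm) cat \<Rightarrow> 'o \<Rightarrow> 'o \<Rightarrow> 'm set" where
  "hom C a b = {f \<in> Arr C. Dom C f = a \<and> Cod C f = b}"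

definition is_category :: "('o, 'm) cat \<Rightarrow> bool" where
  "is_category C \<longleftrightarrow>
     (\<forall>f\<in>Arr C. Dom C f \<in> Obj C \<and> Cod C f \<in> Obj C) \<and>
     (\<forall>a\<in>Obj C. Idt C a \<in> hom C a a) \<and>
     (\<forall>f\<in>Arr C. \<forall>g\<in>Arr C. Cod C f = Dom C g \<longrightarrow>
         Comp C g f \<in> hom C (Dom C f) (Cod C g)) \<and>
     (\<forall>f\<in>Arr C. Comp C (Idt C (Cod C f)) f = f \<and> Comp C f (Idt C (Dom C f)) = f) \<and>
     (\<forall>f\<in>Arr C. \<forall>g\<in>Arr C. \<forall>h\<in>Arr C. Cod C f = Dom C g \<and> Cod C g = Dom C h \<longrightarrow>
         Comp C h (Comp C g f) = Comp C (Comp C h g) f)"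

record ('o1, 'm1, 'o2, 'm2) fctr =
  FObj :: "'o1 \<Rightarrow> 'o2"
  FArr :: "'m1 \<Rightarrow> 'm2"

definition is_functor :: "('o1, 'm1) cat \<Rightarrow> ('o2, 'm2) cat \<Rightarrow> ('o1, 'm1, 'o2, 'm2) fctr \<Rightarrow> bool" where
  "is_functor C D F \<longleftrightarrow>
     is_category C \<and> is_category D \<and>
     (\<forall>a\<in>Obj C. FObj F a \<in> Obj D) \<and>
     (\<forall>f\<in>Arr C. FArr F f \<in> hom D (FObj F (Dom C f)) (FObj F (Cod C f))) \<and>
     (\<forall>a\<in>Obj C. FArr F (Idt C a) = Idt D (FObj F a)) \<and>
     (\<forall>f\<in>Arr C. \<forall>g\<in>Arr C. Cod C f = Dom C g \<longrightarrow>
         FArr F (Comp C g f) = Comp D (FArr F g) (FArr F f))"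

definition id_functor :: "('o, 'm, 'o, 'm) fctr" where
  "id_functor = \<lparr>FObj = (\<lambda>a. a), FArr = (\<lambda>f. f)\<rparr>"

definition fcomp :: "('o2, 'm2, 'o3, 'm3) fctr \<Rightarrow> ('o1, 'm1, 'o2, 'm2) fctr
                      \<Rightarrow> ('o1, 'm1, 'o3, 'm3) fctr" where
  "fcomp G F = \<lparr>FObj = FObj G \<circ> FObj F, FArr = FArr G \<circ> FArr F\<rparr>"

definition is_nat_trans :: "('o1, 'm1) cat \<Rightarrow> ('o2, 'm2) cat \<Rightarrow> ('o1, 'm1, 'o2, 'm2) fctr
     \<Rightarrow> ('o1, 'm1, 'o2, 'm2) fctr \<Rightarrow> ('o1 \<Rightarrow> 'm2) \<Rightarrow> bool" where
  "is_nat_trans C D F G \<tau> \<longleftrightarrow>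
     is_functor C D F \<and> is_functor C D G \<and>
     (\<forall>a\<in>Obj C. \<tau> a \<in> hom D (FObj F a) (FObj G a)) \<and>
     (\<forall>f\<in>Arr C. Comp D (\<tau> (Cod C f)) (FArr F f) = Comp D (FArr G f) (\<tau> (Dom C f)))"

definition is_adjunction :: "('ao, 'am) cat \<Rightarrow> ('bo, 'bm) cat
     \<Rightarrow> ('bo, 'bm, 'ao, 'am) fctr \<Rightarrow> ('ao, 'am, 'bo, 'bm) fctr
     \<Rightarrow> ('bo \<Rightarrow> 'bm) \<Rightarrow> ('ao \<Rightarrow> 'am) \<Rightarrow> bool" where
  "is_adjunction A B L R \<eta> \<epsilon> \<longleftrightarrow>
     is_functor B A L \<and> is_functor A B R \<and>
     is_nat_trans B B id_functor (fcomp R L) \<eta> \<and>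
     is_nat_trans A A (fcomp L R) id_functor \<epsilon> \<and>
     (\<forall>b\<in>Obj B. Comp A (\<epsilon> (FObj L b)) (FArr L (\<eta> b)) = Idt A (FObj L b)) \<and>
     (\<forall>a\<in>Obj A. Comp B (FArr R (\<epsilon> a)) (\<eta> (FObj R a)) = Idt B (FObj R a))"

definition iso_obj :: "('o, 'm) cat \<Rightarrow> 'o \<Rightarrow> 'o \<Rightarrow> bool" where
  "iso_obj C a b \<longleftrightarrow> (\<exists>f g. f \<in> hom C a b \<and> g \<in> hom C b a \<and>
       Comp C g f = Idt C a \<and> Comp C f g = Idt C b)"

text \<open>Objects of the essential image Im F (a full subcategory, determined by its objects).\<close>
definition ess_image :: "('o1, 'm1) cat \<Rightarrow> ('o2, 'm2) cat \<Rightarrow> ('o1, 'm1, 'o2, 'm2) fctr \<Rightarrow> 'o2 set" where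
  "ess_image C D F = {d \<in> Obj D. \<exists>c\<in>Obj C. iso_obj D d (FObj F c)}"

definition ess_surj :: "('o1, 'm1) cat \<Rightarrow> ('o2, 'm2) cat \<Rightarrow> ('o1, 'm1, 'o2, 'm2) fctr \<Rightarrow> bool" where
  "ess_surj C D F \<longleftrightarrow> ess_image C D F = Obj D"

definition fully_faithful :: "('o1, 'm1) cat \<Rightarrow> ('o2, 'm2) cat \<Rightarrow> ('o1, 'm1, 'o2, 'm2) fctr \<Rightarrow> bool" where
  "fully_faithful C D F \<longleftrightarrow>
     (\<forall>a\<in>Obj C. \<forall>b\<in>Obj C. bij_betw (FArr F) (hom C a b) (hom D (FObj F a) (FObj F b)))"

section \<open>A universe type for the tower of Eilenberg--Moore categories\<close>

datatype 'b tw = Base 'b | Pr "'b tw" "'b tw"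

definition pfst :: "'b tw \<Rightarrow> 'b tw" where
  "pfst x = (case x of Pr a b \<Rightarrow> a | Base _ \<Rightarrow> undefined)"

definition psnd :: "'b tw \<Rightarrow> 'b tw" where
  "psnd x = (case x of Pr a b \<Rightarrow> b | Base _ \<Rightarrow> undefined)"

text \<open>Eilenberg--Moore category of the monad (R L, R eps L, eta) on B.
  An algebra (b, h) is encoded as Pr b h; a morphism f : (b,h) -> (b',h') as Pr (Pr x y) f.\<close>
definition em_obj :: "('b tw, 'b tw) cat \<Rightarrow> ('b tw, 'b tw, 'ao, 'am) fctr
     \<Rightarrow> ('ao, 'am, 'b tw, 'b tw) fctr \<Rightarrow> ('b tw \<Rightarrow> 'b tw) \<Rightarrow> ('ao \<Rightarrow> 'am) \<Rightarrow> 'b tw set" where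
  "em_obj B L R \<eta> \<epsilon> = {Pr b h | b h. b \<in> Obj B \<and> h \<in> hom B (FObj R (FObj L b)) b \<and>
       Comp B h (\<eta> b) = Idt B b \<and>
       Comp B h (FArr R (FArr L h)) = Comp B h (FArr R (\<epsilon> (FObj L b)))}"

definition em_arr :: "('b tw, 'b tw) cat \<Rightarrow> ('b tw, 'b tw, 'ao, 'am) fctr
     \<Rightarrow> ('ao, 'am, 'b tw, 'b tw) fctr \<Rightarrow> ('b tw \<Rightarrow> 'b tw) \<Rightarrow> ('ao \<Rightarrow> 'am) \<Rightarrow> 'b tw set" where
  "em_arr B L R \<eta> \<epsilon> = {Pr (Pr x y) f | x y f.
       x \<in> em_obj B L R \<eta> \<epsilon> \<and> y \<in> em_obj B L R \<eta> \<epsilon> \<and>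
       f \<in> hom B (pfst x) (pfst y) \<and>
       Comp B f (psnd x) = Comp B (psnd y) (FArr R (FArr L f))}"

definition em_cat :: "('b tw, 'b tw) cat \<Rightarrow> ('b tw, 'b tw, 'ao, 'am) fctr
     \<Rightarrow> ('ao, 'am, 'b tw, 'b tw) fctr \<Rightarrow> ('b tw \<Rightarrow> 'b tw) \<Rightarrow> ('ao \<Rightarrow> 'am)
     \<Rightarrow> ('b tw, 'b tw) cat" where
  "em_cat B L R \<eta> \<epsilon> =
     \<lparr>Obj = em_obj B L R \<eta> \<epsilon>,
      Arr = em_arr B L R \<eta> \<epsilon>,
      Dom = (\<lambda>m. pfst (pfst m)),
      Cod = (\<lambda>m. psnd (pfst m)),
      Idt = (\<lambda>x. Pr (Pr x x) (Idt B (pfst x))),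
      Comp = (\<lambda>g f. Pr (Pr (pfst (pfst f)) (psnd (pfst g))) (Comp B (psnd g) (psnd f)))\<rparr>"

definition forgetful :: "('b tw, 'b tw, 'b tw, 'b tw) fctr" where
  "forgetful = \<lparr>FObj = pfst, FArr = psnd\<rparr>"

definition comparison :: "('ao, 'am) cat \<Rightarrow> ('ao, 'am, 'b tw, 'b tw) fctr \<Rightarrow> ('ao \<Rightarrow> 'am)
     \<Rightarrow> ('ao, 'am, 'b tw, 'b tw) fctr" where
  "comparison A R \<epsilon> =
     \<lparr>FObj = (\<lambda>Y. Pr (FObj R Y) (FArr R (\<epsilon> Y))),
      FArr = (\<lambda>f. Pr (Pr (Pr (FObj R (Dom A f)) (FArr R (\<epsilon> (Dom A f))))
                         (Pr (FObj R (Cod A f)) (FArr R (\<epsilon> (Cod A f)))))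
                     (FArr R f))\<rparr>"

fun U0 :: "nat \<Rightarrow> ('b tw, 'b tw, 'b tw, 'b tw) fctr" where
  "U0 0 = id_functor"
| "U0 (Suc n) = fcomp (U0 n) forgetful"

definition monadic_decomposition ::
  "('ao, 'am) cat \<Rightarrow> ('b tw, 'b tw) cat \<Rightarrow> ('ao, 'am, 'b tw, 'b tw) fctr \<Rightarrow> nat
   \<Rightarrow> (nat \<Rightarrow> ('b tw, 'b tw) cat) \<Rightarrow> (nat \<Rightarrow> ('ao, 'am, 'b tw, 'b tw) fctr)
   \<Rightarrow> (nat \<Rightarrow> ('b tw, 'b tw, 'ao, 'am) fctr) \<Rightarrow> (nat \<Rightarrow> 'b tw \<Rightarrow> 'b tw)
   \<Rightarrow> (nat \<Rightarrow> 'ao \<Rightarrow> 'am) \<Rightarrow> bool" where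
  "monadic_decomposition A B R N Bs Rs Ls etas epss \<longleftrightarrow>
     is_category A \<and> is_category B \<and> is_functor A B R \<and>
     Bs 0 = B \<and> Rs 0 = R \<and>
     (\<forall>n\<le>N. is_adjunction A (Bs n) (Ls n) (Rs n) (etas n) (epss n)) \<and>
     (\<forall>n<N. Bs (Suc n) = em_cat (Bs n) (Ls n) (Rs n) (etas n) (epss n) \<and>
            Rs (Suc n) = comparison A (Rs n) (epss n)) \<and>
     fully_faithful (Bs N) A (Ls N) \<and>
     (\<forall>n<N. \<not> fully_faithful (Bs n) A (Ls n))"

end

theory Submission
  imports Defs
begin

(* The argument rests on two independent facts.
   (a) Each composite forgetful functor U_{0,k} preserves isomorphisms, and
       U_{0,k} o R_k agrees with R on objects (by induction on k, since
       U_{k,k+1} o R_{k+1} = R_k).  Whenever R = U o F on objects with U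
       preserving isomorphisms, Im R is contained in Im U, with equality when F
       is essentially surjective.  This yields parts 1) and 2).
   (b) For an adjunction whose left adjoint L is full and faithful, every unit
       component is an isomorphism, so the right adjoint is essentially
       surjective.  Applied to the last stage (L_N full and faithful), R_N is
       essentially surjective and 2) gives part 3).
   The file first collects the elementary API for categories, functors and
   adjunctions in the set-based encoding, then proves (b), then (a), and
   finally assembles the theorem. *)

lemma pfst_Pr [simp]: "pfst (Pr a b) = a"
  by (simp add: pfst_def)

lemma psnd_Pr [simp]: "psnd (Pr a b) = b"
  by (simp add: psnd_def)

lemma cat_id: "is_category C \<Longrightarrow> a \<in> Obj C \<Longrightarrow> Idt C a \<in> hom C a a"
  unfolding is_category_def by auto

lemma cat_comp:
  "is_category C \<Longrightarrow> f \<in> hom C a b \<Longrightarrow> g \<in> hom C b c \<Longrightarrow> Comp C g f \<in> hom C a c"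
  unfolding is_category_def hom_def by auto

lemma cat_assoc:
  "is_category C \<Longrightarrow> f \<in> hom C a b \<Longrightarrow> g \<in> hom C b c \<Longrightarrow> h \<in> hom C c d
   \<Longrightarrow> Comp C h (Comp C g f) = Comp C (Comp C h g) f"
  unfolding is_category_def hom_def by (simp (no_asm_use)) (metis (no_types, lifting) mem_Collect_eq)

lemma cat_idl: "is_category C \<Longrightarrow> f \<in> hom C a b \<Longrightarrow> Comp C (Idt C b) f = f"
  unfolding is_category_def hom_def by auto

lemma cat_idr: "is_category C \<Longrightarrow> f \<in> hom C a b \<Longrightarrow> Comp C f (Idt C a) = f"
  unfolding is_category_def hom_def by auto

lemma iso_trans:
  assumes C: "is_category C" and ab: "iso_obj C a b" and bc: "iso_obj C b c"
  shows "iso_obj C a c"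
proof -
  obtain f g where f: "f \<in> hom C a b" "g \<in> hom C b a"
      "Comp C g f = Idt C a" "Comp C f g = Idt C b"
    using ab unfolding iso_obj_def by blast
  obtain f' g' where f': "f' \<in> hom C b c" "g' \<in> hom C c b"
      "Comp C g' f' = Idt C b" "Comp C f' g' = Idt C c"
    using bc unfolding iso_obj_def by blast
  have fwd: "Comp C f' f \<in> hom C a c" using cat_comp[OF C f(1) f'(1)] .
  have bwd: "Comp C g g' \<in> hom C c a" using cat_comp[OF C f'(2) f(2)] .
  have "Comp C (Comp C g g') (Comp C f' f) = Comp C g (Comp C (Comp C g' f') f)"
    using cat_assoc[OF C fwd f'(2) f(2)] cat_assoc[OF C f(1) f'(1) f'(2)] by simp
  also have "\<dots> = Idt C a" using f'(3) f(3) cat_idl[OF C f(1)] by simp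
  finally have left: "Comp C (Comp C g g') (Comp C f' f) = Idt C a" .
  have "Comp C (Comp C f' f) (Comp C g g') = Comp C f' (Comp C (Comp C f g) g')"
    using cat_assoc[OF C bwd f(1) f'(1)] cat_assoc[OF C f'(2) f(2) f(1)] by simp
  also have "\<dots> = Idt C c" using f(4) f'(4) cat_idl[OF C f'(2)] by simp
  finally have right: "Comp C (Comp C f' f) (Comp C g g') = Idt C c" .
  show ?thesis unfolding iso_obj_def using fwd bwd left right by blast
qed

lemma functor_obj: "is_functor C D F \<Longrightarrow> a \<in> Obj C \<Longrightarrow> FObj F a \<in> Obj D"
  unfolding is_functor_def by blast

lemma functor_hom:
  "is_functor C D F \<Longrightarrow> f \<in> hom C a b \<Longrightarrow> FArr F f \<in> hom D (FObj F a) (FObj F b)"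
  unfolding is_functor_def hom_def by auto

lemma functor_id: "is_functor C D F \<Longrightarrow> a \<in> Obj C \<Longrightarrow> FArr F (Idt C a) = Idt D (FObj F a)"
  unfolding is_functor_def by blast

lemma functor_comp:
  "is_functor C D F \<Longrightarrow> f \<in> hom C a b \<Longrightarrow> g \<in> hom C b c
   \<Longrightarrow> FArr F (Comp C g f) = Comp D (FArr F g) (FArr F f)"
  unfolding is_functor_def hom_def by auto

context
  fixes A :: "('ao, 'am) cat" and B :: "('bo, 'bm) cat"
    and L :: "('bo, 'bm, 'ao, 'am) fctr" and R :: "('ao, 'am, 'bo, 'bm) fctr"
    and \<eta> :: "'bo \<Rightarrow> 'bm" and \<epsilon> :: "'ao \<Rightarrow> 'am"
  assumes adj: "is_adjunction A B L R \<eta> \<epsilon>"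
begin

lemma adj_left: "is_functor B A L"
  and adj_right: "is_functor A B R"
  using adj unfolding is_adjunction_def by blast+

lemma adj_cat_A: "is_category A"
  and adj_cat_B: "is_category B"
  using adj_left unfolding is_functor_def by blast+

lemma unit_hom: "b \<in> Obj B \<Longrightarrow> \<eta> b \<in> hom B b (FObj R (FObj L b))"
  using adj unfolding is_adjunction_def is_nat_trans_def fcomp_def id_functor_def by simp

lemma unit_natural:
  "f \<in> hom B a b \<Longrightarrow> Comp B (\<eta> b) f = Comp B (FArr R (FArr L f)) (\<eta> a)"
  using adj unfolding is_adjunction_def is_nat_trans_def fcomp_def id_functor_def hom_def
  by auto

lemma counit_hom: "a \<in> Obj A \<Longrightarrow> \<epsilon> a \<in> hom A (FObj L (FObj R a)) a"
  using adj unfolding is_adjunction_def is_nat_trans_def fcomp_def id_functor_def by simp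

lemma triangle_left: "b \<in> Obj B \<Longrightarrow> Comp A (\<epsilon> (FObj L b)) (FArr L (\<eta> b)) = Idt A (FObj L b)"
  using adj unfolding is_adjunction_def by blast

lemma triangle_right: "a \<in> Obj A \<Longrightarrow> Comp B (FArr R (\<epsilon> a)) (\<eta> (FObj R a)) = Idt B (FObj R a)"
  using adj unfolding is_adjunction_def by blast

text \<open>A morphism \<open>\<phi> : c \<rightarrow> R a\<close> is recovered from its transpose \<open>\<epsilon>\<^sub>a \<circ> L \<phi>\<close>;
  hence two such morphisms with equal transposes coincide.\<close>

lemma transpose_inverse:
  assumes a: "a \<in> Obj A" and \<phi>: "\<phi> \<in> hom B c (FObj R a)"
  shows "Comp B (FArr R (Comp A (\<epsilon> a) (FArr L \<phi>))) (\<eta> c) = \<phi>"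
proof -
  have c: "c \<in> Obj B" using \<phi> adj_cat_B unfolding hom_def is_category_def by blast
  have L\<phi>: "FArr L \<phi> \<in> hom A (FObj L c) (FObj L (FObj R a))" using functor_hom[OF adj_left \<phi>] .
  have RL\<phi>: "FArr R (FArr L \<phi>) \<in> hom B (FObj R (FObj L c)) (FObj R (FObj L (FObj R a)))"
    using functor_hom[OF adj_right L\<phi>] .
  have R\<epsilon>: "FArr R (\<epsilon> a) \<in> hom B (FObj R (FObj L (FObj R a))) (FObj R a)"
    using functor_hom[OF adj_right counit_hom[OF a]] .
  have \<eta>Ra: "\<eta> (FObj R a) \<in> hom B (FObj R a) (FObj R (FObj L (FObj R a)))"
    using unit_hom functor_obj[OF adj_right a] .
  have "Comp B (FArr R (Comp A (\<epsilon> a) (FArr L \<phi>))) (\<eta> c)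
      = Comp B (FArr R (\<epsilon> a)) (Comp B (FArr R (FArr L \<phi>)) (\<eta> c))"
    using functor_comp[OF adj_right L\<phi> counit_hom[OF a]]
      cat_assoc[OF adj_cat_B unit_hom[OF c] RL\<phi> R\<epsilon>] by simp
  also have "\<dots> = Comp B (Comp B (FArr R (\<epsilon> a)) (\<eta> (FObj R a))) \<phi>"
    using unit_natural[OF \<phi>] cat_assoc[OF adj_cat_B \<phi> \<eta>Ra R\<epsilon>] by simp
  also have "\<dots> = \<phi>"
    using triangle_right[OF a] cat_idl[OF adj_cat_B \<phi>] by simp
  finally show ?thesis .
qed

text \<open>If the left adjoint is full and faithful, each unit component \<open>\<eta>\<^sub>b\<close> is an
  isomorphism: its inverse is the preimage under \<open>L\<close> of the counit \<open>\<epsilon>\<^sub>L\<^sub>b\<close>.\<close>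

lemma unit_iso_if_left_ff:
  assumes ff: "fully_faithful B A L" and b: "b \<in> Obj B"
  shows "iso_obj B b (FObj R (FObj L b))"
proof -
  define Lb where "Lb = FObj L b"
  define RLb where "RLb = FObj R Lb"
  have Lb: "Lb \<in> Obj A" using functor_obj[OF adj_left b] Lb_def by simp
  have RLb: "RLb \<in> Obj B" using functor_obj[OF adj_right Lb] RLb_def by simp
  have \<eta>b: "\<eta> b \<in> hom B b RLb" using unit_hom[OF b] Lb_def RLb_def by simp
  have \<epsilon>Lb: "\<epsilon> Lb \<in> hom A (FObj L RLb) Lb" using counit_hom[OF Lb] RLb_def by simp
  have L\<eta>b: "FArr L (\<eta> b) \<in> hom A Lb (FObj L RLb)"
    using functor_hom[OF adj_left \<eta>b] Lb_def by simp
  have L_bij: "bij_betw (FArr L) (hom B x y) (hom A (FObj L x) (FObj L y))"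
    if "x \<in> Obj B" "y \<in> Obj B" for x y
    using ff that unfolding fully_faithful_def by blast
  have "\<epsilon> Lb \<in> FArr L ` hom B RLb b"
    using L_bij[OF RLb b] \<epsilon>Lb unfolding bij_betw_def Lb_def by simp
  then obtain g where g: "g \<in> hom B RLb b" and Lg: "FArr L g = \<epsilon> Lb"
    by (metis imageE)
  have "FArr L (Comp B g (\<eta> b)) = Comp A (\<epsilon> Lb) (FArr L (\<eta> b))"
    using functor_comp[OF adj_left \<eta>b g] Lg by simp
  also have "\<dots> = FArr L (Idt B b)"
    using triangle_left[OF b] functor_id[OF adj_left b] Lb_def by simp
  finally have "FArr L (Comp B g (\<eta> b)) = FArr L (Idt B b)" .
  then have left_inverse: "Comp B g (\<eta> b) = Idt B b"
    by (rule inj_onD[OF bij_betw_imp_inj_on[OF L_bij[OF b b]] _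
          cat_comp[OF adj_cat_B \<eta>b g] cat_id[OF adj_cat_B b]])
  have right_inverse: "Comp B (\<eta> b) g = Idt B RLb"
  proof -
    have \<eta>g: "Comp B (\<eta> b) g \<in> hom B RLb (FObj R Lb)"
      using cat_comp[OF adj_cat_B g \<eta>b] RLb_def by simp
    have id: "Idt B RLb \<in> hom B RLb (FObj R Lb)"
      using cat_id[OF adj_cat_B RLb] RLb_def by simp
    have Lg_hom: "FArr L g \<in> hom A (FObj L RLb) Lb" using Lg \<epsilon>Lb by simp
    have "Comp A (\<epsilon> Lb) (FArr L (Comp B (\<eta> b) g))
        = Comp A (\<epsilon> Lb) (Comp A (FArr L (\<eta> b)) (FArr L g))"
      using functor_comp[OF adj_left g \<eta>b] by simp
    also have "\<dots> = Comp A (Comp A (\<epsilon> Lb) (FArr L (\<eta> b))) (FArr L g)"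
      using cat_assoc[OF adj_cat_A Lg_hom L\<eta>b \<epsilon>Lb] .
    also have "\<dots> = \<epsilon> Lb"
      using triangle_left[OF b] cat_idl[OF adj_cat_A Lg_hom] Lg Lb_def by simp
    also have "\<dots> = Comp A (\<epsilon> Lb) (FArr L (Idt B RLb))"
      using functor_id[OF adj_left RLb] cat_idr[OF adj_cat_A \<epsilon>Lb] by simp
    finally have same_transpose:
      "Comp A (\<epsilon> Lb) (FArr L (Comp B (\<eta> b) g)) = Comp A (\<epsilon> Lb) (FArr L (Idt B RLb))" .
    show ?thesis
      using transpose_inverse[OF Lb \<eta>g] transpose_inverse[OF Lb id] same_transpose
      by metis
  qed
  show ?thesis
    unfolding iso_obj_def Lb_def[symmetric] RLb_def[symmetric]
    using \<eta>b g left_inverse right_inverse by blast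
qed

text \<open>Consequently a right adjoint with full and faithful left adjoint is
  essentially surjective: every \<open>b\<close> is isomorphic to \<open>R (L b)\<close>.\<close>

lemma ess_surj_if_left_ff:
  assumes ff: "fully_faithful B A L"
  shows "ess_surj A B R"
  unfolding ess_surj_def ess_image_def
  using unit_iso_if_left_ff[OF ff] functor_obj[OF adj_left] by blast

end

lemma ess_image_factor_subset:
  assumes F_obj: "\<And>a. a \<in> Obj A \<Longrightarrow> FObj F a \<in> Obj D"
    and factor: "\<And>a. a \<in> Obj A \<Longrightarrow> FObj U (FObj F a) = FObj R a"
  shows "ess_image A B R \<subseteq> ess_image D B U"
proof
  fix d assume "d \<in> ess_image A B R"
  then obtain c where "d \<in> Obj B" "c \<in> Obj A" "iso_obj B d (FObj U (FObj F c))"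
    unfolding ess_image_def using factor by auto
  then show "d \<in> ess_image D B U" unfolding ess_image_def using F_obj by blast
qed

lemma ess_image_factor_eq:
  assumes B: "is_category B"
    and F_obj: "\<And>a. a \<in> Obj A \<Longrightarrow> FObj F a \<in> Obj D"
    and factor: "\<And>a. a \<in> Obj A \<Longrightarrow> FObj U (FObj F a) = FObj R a"
    and U_iso: "\<And>x y. iso_obj D x y \<Longrightarrow> iso_obj B (FObj U x) (FObj U y)"
    and F_surj: "ess_surj A D F"
  shows "ess_image A B R = ess_image D B U"
proof
  show "ess_image A B R \<subseteq> ess_image D B U"
    using ess_image_factor_subset F_obj factor by metis
  show "ess_image D B U \<subseteq> ess_image A B R"
  proof
    fix d assume "d \<in> ess_image D B U"
    then obtain x where d: "d \<in> Obj B" "x \<in> Obj D" "iso_obj B d (FObj U x)"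
      unfolding ess_image_def by blast
    obtain c where c: "c \<in> Obj A" "iso_obj D x (FObj F c)"
      using F_surj d(2) unfolding ess_surj_def ess_image_def by blast
    have "iso_obj B (FObj U x) (FObj R c)" using U_iso[OF c(2)] factor[OF c(1)] by simp
    then have "iso_obj B d (FObj R c)" using iso_trans[OF B d(3)] by blast
    then show "d \<in> ess_image A B R" using d(1) c(1) unfolding ess_image_def by blast
  qed
qed

lemma em_forget_iso:
  assumes "iso_obj (em_cat B L R \<eta> \<epsilon>) x y"
  shows "iso_obj B (pfst x) (pfst y)"
proof -
  obtain f g where f: "f \<in> hom (em_cat B L R \<eta> \<epsilon>) x y" "g \<in> hom (em_cat B L R \<eta> \<epsilon>) y x"
    "Comp (em_cat B L R \<eta> \<epsilon>) g f = Idt (em_cat B L R \<eta> \<epsilon>) x"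
    "Comp (em_cat B L R \<eta> \<epsilon>) f g = Idt (em_cat B L R \<eta> \<epsilon>) y"
    using assms unfolding iso_obj_def by blast
  have "psnd f \<in> hom B (pfst x) (pfst y)" "psnd g \<in> hom B (pfst y) (pfst x)"
    using f(1,2) unfolding hom_def em_cat_def em_arr_def by auto
  moreover have "Comp B (psnd g) (psnd f) = Idt B (pfst x)"
    using arg_cong[OF f(3), of psnd] by (simp add: em_cat_def)
  moreover have "Comp B (psnd f) (psnd g) = Idt B (pfst y)"
    using arg_cong[OF f(4), of psnd] by (simp add: em_cat_def)
  ultimately show ?thesis unfolding iso_obj_def by blast
qed

lemma U0_Suc_obj: "FObj (U0 (Suc k)) x = FObj (U0 k) (pfst x)"
  by (simp add: fcomp_def forgetful_def)

lemma U0_preserves_iso: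
  assumes "Bs 0 = B"
    and "\<forall>j<k. Bs (Suc j) = em_cat (Bs j) (Ls j) (Rs j) (etas j) (epss j)"
    and "iso_obj (Bs k) x y"
  shows "iso_obj B (FObj (U0 k) x) (FObj (U0 k) y)"
  using assms(2,3)
proof (induction k arbitrary: x y)
  case 0
  then show ?case using assms(1) by (simp add: id_functor_def)
next
  case (Suc k)
  have "Bs (Suc k) = em_cat (Bs k) (Ls k) (Rs k) (etas k) (epss k)"
    using Suc.prems(1) by blast
  then have "iso_obj (Bs k) (pfst x) (pfst y)"
    using em_forget_iso Suc.prems(2) by metis
  then have "iso_obj B (FObj (U0 k) (pfst x)) (FObj (U0 k) (pfst y))"
    using Suc.IH Suc.prems(1) by simp
  then show ?case by (simp only: U0_Suc_obj)
qed

text \<open>... and \<open>U\<^sub>0\<^sub>,\<^sub>k \<circ> R\<^sub>k\<close> agrees with \<open>R\<close> on objects, since each comparison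
  functor lifts the previous one through the forgetful functor.\<close>

lemma U0_comparison:
  assumes "Rs 0 = R"
    and "\<forall>j<k. Rs (Suc j) = comparison A (Rs j) (epss j)"
  shows "FObj (U0 k) (FObj (Rs k) a) = FObj R a"
  using assms(2)
proof (induction k)
  case 0
  then show ?case using assms(1) by (simp add: id_functor_def)
next
  case (Suc k)
  have IH: "FObj (U0 k) (FObj (Rs k) a) = FObj R a" using Suc by simp
  have "Rs (Suc k) = comparison A (Rs k) (epss k)" using Suc.prems by blast
  then have "pfst (FObj (Rs (Suc k)) a) = FObj (Rs k) a" by (simp add: comparison_def)
  then show ?case by (simp only: U0_Suc_obj IH)
qed

theorem proposition1p13:
  fixes A :: "('ao, 'am) cat" and B :: "('b tw, 'b tw) cat"
    and R :: "('ao, 'am, 'b tw, 'b tw) fctr" and N n :: nat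
    and Bs :: "nat \<Rightarrow> ('b tw, 'b tw) cat" and Rs :: "nat \<Rightarrow> ('ao, 'am, 'b tw, 'b tw) fctr"
    and Ls :: "nat \<Rightarrow> ('b tw, 'b tw, 'ao, 'am) fctr"
    and etas :: "nat \<Rightarrow> 'b tw \<Rightarrow> 'b tw" and epss :: "nat \<Rightarrow> 'ao \<Rightarrow> 'am"
  assumes "monadic_decomposition A B R N Bs Rs Ls etas epss"
    and "n \<le> N"
  shows "ess_image A B R \<subseteq> ess_image (Bs n) B (U0 n) \<and>
         (ess_surj A (Bs n) (Rs n) \<longrightarrow> ess_image A B R = ess_image (Bs n) B (U0 n)) \<and>
         ess_image A B R = ess_image (Bs N) B (U0 N)"
proof -
  note md = assms(1)[unfolded monadic_decomposition_def]
  have adj: "is_adjunction A (Bs k) (Ls k) (Rs k) (etas k) (epss k)" if "k \<le> N" for k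
    using md that by blast
  have R_obj: "FObj (Rs k) a \<in> Obj (Bs k)" if "k \<le> N" "a \<in> Obj A" for k a
    using functor_obj[OF adj_right[OF adj] that(2)] that(1) .
  have factor: "FObj (U0 k) (FObj (Rs k) a) = FObj R a" if "k \<le> N" for k a
    using U0_comparison[of Rs R k A epss] md that by simp
  have U_iso: "iso_obj (Bs k) x y \<Longrightarrow> iso_obj B (FObj (U0 k) x) (FObj (U0 k) y)"
    if "k \<le> N" for k x y
    using U0_preserves_iso[of Bs B k Ls Rs etas epss x y] md that by simp
  have image_eq: "ess_image A B R = ess_image (Bs k) B (U0 k)"
    if "k \<le> N" "ess_surj A (Bs k) (Rs k)" for k
    using ess_image_factor_eq[of B A "Rs k" "Bs k" "U0 k" R] md R_obj factor U_iso that by simp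
  \<comment> \<open>The last stage has a full and faithful left adjoint.\<close>
  have "ess_surj A (Bs N) (Rs N)"
    using ess_surj_if_left_ff[OF adj] md by blast
  then show ?thesis
    using ess_image_factor_subset[of A "Rs n" "Bs n" "U0 n" R B] R_obj factor image_eq assms(2)
    by simp
qed

end
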